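(* Let $N$ be a necklace with at least two vertices and with exactly $c$ cycles. Then ${\rm mvr}(N)=|N|-c-1$, where $|N|$ is the number of vertices of $N$.
   Context: All graphs are finite and simple. A necklace is a connected graph in which each vertex belongs to at most one cycle. An orthogonal vector representation of a graph $G=(V,E)$ in $\mathbb{R}^d$ is a map $\phi:V\to\mathbb{R}^d$ with $\phi(v)\neq 0$ for all $v$, and for distinct $u,v$: $\langle\phi(u),\phi(v)\rangle=0$ if and only if $uv\notin E$. ${\rm mvr}(G)$ is the smallest $d$ for which such a representation exists. *)

theory Defs
  imports Complex_Main
begin

definition simple_graph :: "'a set \<Rightarrow> 'a set set \<Rightarrow> bool" where
  "simple_graph V E \<longleftrightarrow> finite V \<and> (\<forall>e\<in>E. e \<subseteq> V \<and> card e = 2)"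

definition connected_graph :: "'a set \<Rightarrow> 'a set set \<Rightarrow> bool" where
  "connected_graph V E \<longleftrightarrow> V \<noteq> {} \<and>
     (\<forall>u\<in>V. \<forall>v\<in>V. (u, v) \<in> {(x, y). {x, y} \<in> E}\<^sup>*)"

definition cycle_edges :: "'a list \<Rightarrow> 'a set set" where
  "cycle_edges vs = {{vs ! i, vs ! ((i + 1) mod length vs)} | i. i < length vs}"

text \<open>The cycles of G, each identified with its (nonempty) edge set, i.e. as subgraphs.\<close>
definition cycles :: "'a set \<Rightarrow> 'a set set \<Rightarrow> 'a set set set" where
  "cycles V E = {cycle_edges vs | vs. distinct vs \<and> length vs \<ge> 3 \<and> set vs \<subseteq> V
                                     \<and> cycle_edges vs \<subseteq> E}"

definition necklace :: "'a set \<Rightarrow> 'a set set \<Rightarrow> bool" where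
  "necklace V E \<longleftrightarrow> connected_graph V E \<and>
     (\<forall>v\<in>V. card {C \<in> cycles V E. v \<in> \<Union>C} \<le> 1)"

text \<open>Orthogonal vector representation in R^d; vectors of R^d are encoded as
  functions nat \<Rightarrow> real, only the coordinates i < d being relevant.\<close>
definition orth_rep :: "'a set \<Rightarrow> 'a set set \<Rightarrow> nat \<Rightarrow> ('a \<Rightarrow> nat \<Rightarrow> real) \<Rightarrow> bool" where
  "orth_rep V E d \<phi> \<longleftrightarrow>
     (\<forall>v\<in>V. \<exists>i<d. \<phi> v i \<noteq> 0) \<and>
     (\<forall>u\<in>V. \<forall>v\<in>V. u \<noteq> v \<longrightarrow> ((\<Sum>i<d. \<phi> u i * \<phi> v i) = 0 \<longleftrightarrow> {u, v} \<notin> E))"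

definition mvr :: "'a set \<Rightarrow> 'a set set \<Rightarrow> nat" where
  "mvr V E = (LEAST d. \<exists>\<phi>. orth_rep V E d \<phi>)"

end

theory Submission
  imports Defs "HOL-Library.Function_Algebras"
begin

text \<open>
  Lower bound: for an orthogonal representation \<open>\<phi>\<close> of a necklace with \<open>c\<close> cycles in \<open>\<real>\<^sup>d\<close>,
  all but at most \<open>c + 1\<close> of the vectors \<open>\<phi> v\<close> are linearly independent. Delete a vertex
  \<open>v\<close> that is not a cut vertex (an end of a maximal path: its neighbours all lie on the path).
  If \<open>v\<close> lies on a cycle, the rest has one cycle less and \<open>v\<close> is simply discarded. Otherwise
  \<open>v\<close> is pendant with neighbour \<open>u\<close>; replacing \<open>\<phi> u\<close> by its component orthogonal to
  \<open>\<phi> v\<close> represents the rest, and as \<open>\<phi> v\<close> is orthogonal to all vectors but \<open>\<phi> u\<close>,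
  adding \<open>\<phi> v\<close> to an independent family of the new representation keeps it independent.

  Upper bound: if every edge lies on a cycle, the necklace is a cycle \<open>C\<^sub>k\<close>, which has an
  explicit representation in \<open>\<real>\<^sup>k\<^sup>-\<^sup>2\<close>. Otherwise it has a bridge \<open>ab\<close>; representations
  of the two sides are placed on complementary blocks of coordinates, plus one coordinate
  shared by \<open>a\<close> and \<open>b\<close> only.
\<close>

section \<open>Linearly independent families of coordinate vectors\<close>

lemma sum_fun_apply: "(\<Sum>x\<in>A. f x) i = (\<Sum>x\<in>A. f x i)"
  by (induction A rule: infinite_finite_induct) auto

interpretation coord: vector_space "\<lambda>c (g :: nat \<Rightarrow> real) i. c * g i"
  by unfold_locales (auto simp: fun_eq_iff algebra_simps)

definition truncate :: "nat \<Rightarrow> (nat \<Rightarrow> real) \<Rightarrow> nat \<Rightarrow> real" where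
  "truncate d g i = (if i < d then g i else 0)"

definition independent_on :: "nat \<Rightarrow> ('a \<Rightarrow> nat \<Rightarrow> real) \<Rightarrow> 'a set \<Rightarrow> bool" where
  "independent_on d f T \<longleftrightarrow>
     (\<forall>x. (\<forall>i<d. (\<Sum>w\<in>T. x w * f w i) = 0) \<longrightarrow> (\<forall>w\<in>T. x w = 0))"

lemma truncate_in_span_units:
  "truncate d g \<in> coord.span ((\<lambda>j i. if i = j then 1 else 0) ` {..<d})"
proof -
  have "truncate d g = (\<Sum>j<d. (\<lambda>i. g j * (if i = j then 1 else 0)))"
    by (auto simp: truncate_def fun_eq_iff sum_fun_apply if_distrib[of "(*) _"] sum.delta
        cong: if_cong)
  also have "\<dots> \<in> coord.span ((\<lambda>j i. if i = j then 1 else 0) ` {..<d})"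
    by (intro coord.span_sum coord.span_scale coord.span_base) auto
  finally show ?thesis .
qed

lemma inj_on_truncate_if_independent_on:
  assumes "finite T" "independent_on d f T"
  shows "inj_on (\<lambda>w. truncate d (f w)) T"
proof (rule inj_onI, rule ccontr)
  fix w w' assume w: "w \<in> T" "w' \<in> T" and eq: "truncate d (f w) = truncate d (f w')"
    and ne: "w \<noteq> w'"
  define x where "x z = (if z = w then 1 else if z = w' then -1 else 0 :: real)" for z
  have "(\<Sum>z\<in>T. x z * f z i) =
      (\<Sum>z\<in>T. (if z = w then f z i else 0) - (if z = w' then f z i else 0))" for i
    by (rule sum.cong) (auto simp: x_def ne)
  then have "(\<Sum>z\<in>T. x z * f z i) = f w i - f w' i" for i
    using assms(1) w by (simp add: sum_subtractf)
  moreover have "f w i = f w' i" if "i < d" for i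
    using fun_cong[OF eq, of i] that by (simp add: truncate_def)
  ultimately have "x w = 0"
    using assms(2) w(1) unfolding independent_on_def by simp
  then show False by (simp add: x_def)
qed

lemma independent_truncate_if_independent_on:
  assumes fin: "finite T" and ind: "independent_on d f T"
  shows "coord.independent ((\<lambda>w. truncate d (f w)) ` T)"
proof (rule coord.independent_if_scalars_zero)
  fix g :: "(nat \<Rightarrow> real) \<Rightarrow> real" and v
  assume sum0: "(\<Sum>y\<in>(\<lambda>w. truncate d (f w)) ` T. (\<lambda>i. g y * y i)) = 0"
    and v: "v \<in> (\<lambda>w. truncate d (f w)) ` T"
  have "(\<Sum>w\<in>T. (\<lambda>i. g (truncate d (f w)) * truncate d (f w) i)) = 0"
    using sum0 by (simp add: sum.reindex[OF inj_on_truncate_if_independent_on[OF fin ind]])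
  then have coordinatewise: "(\<Sum>w\<in>T. g (truncate d (f w)) * truncate d (f w) i) = 0" for i
    by (metis (no_types, lifting) sum_fun_apply zero_fun_apply sum.cong)
  have "\<forall>i<d. (\<Sum>w\<in>T. g (truncate d (f w)) * f w i) = 0"
  proof (intro allI impI)
    fix i assume "i < d"
    then show "(\<Sum>w\<in>T. g (truncate d (f w)) * f w i) = 0"
      using coordinatewise[of i] by (simp add: truncate_def[of d _ i])
  qed
  then show "g v = 0" using ind v unfolding independent_on_def by auto
qed (use fin in simp)

lemma card_le_if_independent_on:
  assumes "finite T" "independent_on d f T"
  shows "card T \<le> d"
proof -
  have "card ((\<lambda>w. truncate d (f w)) ` T) \<le> card ((\<lambda>j i. if i = j then 1 else 0 :: real) ` {..<d})"
    using coord.independent_span_bound independent_truncate_if_independent_on[OF assms]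
      truncate_in_span_units by blast
  also have "\<dots> \<le> d" using card_image_le by fastforce
  finally show ?thesis using card_image[OF inj_on_truncate_if_independent_on[OF assms]] by simp
qed

section \<open>Inner products and orthogonal representations\<close>

definition dot :: "nat \<Rightarrow> (nat \<Rightarrow> real) \<Rightarrow> (nat \<Rightarrow> real) \<Rightarrow> real" where
  "dot d f g = (\<Sum>i<d. f i * g i)"

lemma dot_commute: "dot d f g = dot d g f"
  unfolding dot_def by (simp add: mult.commute)

lemma dot_self_pos:
  assumes "\<exists>i<d. f i \<noteq> 0"
  shows "0 < dot d f f"
proof -
  obtain i where i: "i < d" "f i \<noteq> 0" using assms by blast
  have "0 < f i * f i" using i(2) by (metis not_real_square_gt_zero)
  also have "\<dots> \<le> dot d f f"
    unfolding dot_def using i(1) by (intro member_le_sum) auto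
  finally show ?thesis .
qed

lemma nonzero_if_dot_nonzero: "dot d f g \<noteq> 0 \<Longrightarrow> \<exists>i<d. f i \<noteq> 0"
  unfolding dot_def by (metis (no_types, lifting) lessThan_iff mult_zero_left sum.neutral)

lemma dot_diff_scale: "dot d (\<lambda>i. f i - t * h i) g = dot d f g - t * dot d h g"
  unfolding dot_def by (simp add: algebra_simps sum_subtractf sum_distrib_left)

lemma dot_sum_left: "dot d (\<lambda>i. \<Sum>w\<in>T. x w * f w i) g = (\<Sum>w\<in>T. x w * dot d (f w) g)"
  unfolding dot_def by (simp add: sum_distrib_left sum_distrib_right mult.assoc sum.swap[of _ T])

lemma dot_split:
  "dot (m + 1 + n) f g = dot m f g + f m * g m + dot n (\<lambda>j. f (m + 1 + j)) (\<lambda>j. g (m + 1 + j))"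
  unfolding dot_def by (induction n) (simp_all add: add.assoc)

definition nonzero_on :: "'a set \<Rightarrow> nat \<Rightarrow> ('a \<Rightarrow> nat \<Rightarrow> real) \<Rightarrow> bool" where
  "nonzero_on V d \<phi> \<longleftrightarrow> (\<forall>v\<in>V. \<exists>i<d. \<phi> v i \<noteq> 0)"

definition orth_pattern :: "'a set \<Rightarrow> 'a set set \<Rightarrow> nat \<Rightarrow> ('a \<Rightarrow> nat \<Rightarrow> real) \<Rightarrow> bool" where
  "orth_pattern V E d \<phi> \<longleftrightarrow>
     (\<forall>u\<in>V. \<forall>w\<in>V. u \<noteq> w \<longrightarrow> (dot d (\<phi> u) (\<phi> w) = 0 \<longleftrightarrow> {u, w} \<notin> E))"

lemma orth_rep_iff: "orth_rep V E d \<phi> \<longleftrightarrow> nonzero_on V d \<phi> \<and> orth_pattern V E d \<phi>"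
  unfolding orth_rep_def nonzero_on_def orth_pattern_def dot_def by simp

section \<open>Walks and cycles\<close>

definition adj :: "'a set set \<Rightarrow> ('a \<times> 'a) set" where
  "adj E = {(x, y). {x, y} \<in> E}"

lemma adj_iff [simp]: "(x, y) \<in> adj E \<longleftrightarrow> {x, y} \<in> E"
  by (simp add: adj_def)

lemma connected_graph_adj:
  "connected_graph V E \<longleftrightarrow> V \<noteq> {} \<and> (\<forall>u\<in>V. \<forall>v\<in>V. (u, v) \<in> (adj E)\<^sup>*)"
  unfolding connected_graph_def adj_def by simp

lemma converse_adj [simp]: "(adj E)\<inverse> = adj E"
  by (auto simp: adj_def insert_commute)

lemma rtrancl_adj_sym: "(x, y) \<in> (adj E)\<^sup>* \<Longrightarrow> (y, x) \<in> (adj E)\<^sup>*"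
  by (metis converse_adj rtrancl_converseI)

lemma rtrancl_adj_via: "(z, x) \<in> (adj E)\<^sup>* \<Longrightarrow> (z, y) \<in> (adj E)\<^sup>* \<Longrightarrow> (x, y) \<in> (adj E)\<^sup>*"
  by (meson rtrancl_adj_sym rtrancl_trans)

abbreviation delete_vertex :: "'a set set \<Rightarrow> 'a \<Rightarrow> 'a set set" where
  "delete_vertex E v \<equiv> {e \<in> E. v \<notin> e}"

abbreviation induced :: "'a set set \<Rightarrow> 'a set \<Rightarrow> 'a set set" where
  "induced E X \<equiv> {e \<in> E. e \<subseteq> X}"

lemma edge_endpoints:
  assumes "simple_graph V E" "{x, y} \<in> E"
  shows "x \<noteq> y" "x \<in> V" "y \<in> V"
proof -
  have "card {x, y} = 2" "{x, y} \<subseteq> V" using assms unfolding simple_graph_def by auto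
  then show "x \<noteq> y" "x \<in> V" "y \<in> V" by (cases "x = y"; simp)+
qed

lemma simple_graph_delete_vertex: "simple_graph V E \<Longrightarrow> simple_graph (V - {v}) (delete_vertex E v)"
  unfolding simple_graph_def by auto

lemma simple_graph_induced: "simple_graph V E \<Longrightarrow> X \<subseteq> V \<Longrightarrow> simple_graph X (induced E X)"
  unfolding simple_graph_def by (auto intro: finite_subset)

lemma connected_graph_neighbour:
  assumes "connected_graph V E" "v \<in> V" "V \<noteq> {v}"
  obtains u where "{v, u} \<in> E"
proof -
  obtain w where w: "w \<in> V" "w \<noteq> v" using assms(2,3) by blast
  have "(v, w) \<in> (adj E)\<^sup>*" using assms(1,2) w(1) unfolding connected_graph_adj by blast
  then show thesis using w(2) that by (induction rule: converse_rtrancl_induct) auto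
qed

lemma rtrancl_adj_last_edge:
  assumes "(x, v) \<in> (adj E)\<^sup>*" "x \<noteq> v"
  shows "\<exists>u. (x, u) \<in> (adj (delete_vertex E v))\<^sup>* \<and> {u, v} \<in> E"
  using assms
proof (induction rule: converse_rtrancl_induct)
  case (step x y)
  show ?case
  proof (cases "y = v")
    case False
    then obtain u where "(y, u) \<in> (adj (delete_vertex E v))\<^sup>*" "{u, v} \<in> E" using step by blast
    moreover have "(x, y) \<in> adj (delete_vertex E v)" using step(1) False step.prems by auto
    ultimately show ?thesis by (meson converse_rtrancl_into_rtrancl)
  qed (use step in auto)
qed simp

lemma rtrancl_adj_exit_edge:
  assumes "(a, b) \<in> (adj E)\<^sup>*" "a \<in> W" "b \<notin> W"
  shows "\<exists>y z. y \<in> W \<and> z \<notin> W \<and> {y, z} \<in> E"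
  using assms by (induction rule: rtrancl_induct) auto

lemma connected_graph_closed_subset:
  assumes "connected_graph V E" "W \<subseteq> V" "x \<in> W" and closed: "\<And>y z. y \<in> W \<Longrightarrow> {y, z} \<in> E \<Longrightarrow> z \<in> W"
  shows "W = V"
proof (rule ccontr)
  assume "W \<noteq> V"
  then obtain z where z: "z \<in> V" "z \<notin> W" using assms(2) by blast
  then have "(x, z) \<in> (adj E)\<^sup>*" using assms(1-3) unfolding connected_graph_adj by blast
  then obtain y z' where "y \<in> W" "z' \<notin> W" "{y, z'} \<in> E"
    using rtrancl_adj_exit_edge assms(3) z(2) by metis
  then show False using closed by blast
qed

definition walk :: "'a set set \<Rightarrow> 'a list \<Rightarrow> bool" where
  "walk E p \<longleftrightarrow> (\<forall>i. Suc i < length p \<longrightarrow> {p ! i, p ! Suc i} \<in> E)"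

lemma walk_Cons_Cons: "walk E (x # y # p) \<longleftrightarrow> {x, y} \<in> E \<and> walk E (y # p)"
  unfolding walk_def by (auto simp: less_Suc_eq_0_disj)

lemma walk_Cons: "walk E p \<Longrightarrow> p \<noteq> [] \<Longrightarrow> {x, hd p} \<in> E \<Longrightarrow> walk E (x # p)"
  by (cases p) (auto simp: walk_Cons_Cons)

lemma walk_single [simp]: "walk E [x]"
  by (simp add: walk_def)

lemma walk_drop: "walk E p \<Longrightarrow> walk E (drop j p)"
  unfolding walk_def by (auto simp: add.commute[of j])

lemma walk_mono: "walk E p \<Longrightarrow> E \<subseteq> F \<Longrightarrow> walk F p"
  unfolding walk_def by blast

lemma walk_nth_rtrancl:
  assumes "walk E p" "j < length p" "i \<le> j"
  shows "(p ! i, p ! j) \<in> (adj E)\<^sup>*"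
  using assms(2,3)
proof (induction j)
  case (Suc j)
  show ?case
  proof (cases "i = Suc j")
    case False
    then have "(p ! i, p ! j) \<in> (adj E)\<^sup>*" using Suc by simp
    moreover have "{p ! j, p ! Suc j} \<in> E" using assms(1) Suc.prems unfolding walk_def by blast
    ultimately show ?thesis by (simp add: rtrancl_into_rtrancl)
  qed simp
qed simp

lemma set_walk_subset:
  assumes "walk E p" "2 \<le> length p"
  shows "set p \<subseteq> \<Union>E"
proof
  fix x assume "x \<in> set p"
  then obtain i where i: "i < length p" "p ! i = x" by (auto simp: in_set_conv_nth)
  show "x \<in> \<Union>E"
  proof (cases "Suc i < length p")
    case False
    then have "Suc (i - 1) < length p" "Suc (i - 1) = i" using assms(2) i(1) by auto
    then have "{p ! (i - 1), p ! i} \<in> E" using assms(1) unfolding walk_def by metis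
    then show ?thesis using i by blast
  qed (use assms(1) i in \<open>auto simp: walk_def\<close>)
qed

lemma rtrancl_adj_imp_path:
  assumes "(x, y) \<in> (adj E)\<^sup>*"
  shows "\<exists>p. p \<noteq> [] \<and> hd p = x \<and> last p = y \<and> distinct p \<and> walk E p"
  using assms
proof (induction rule: converse_rtrancl_induct)
  case base
  show ?case by (rule exI[of _ "[y]"]) simp
next
  case (step x z)
  then obtain p where p: "p \<noteq> []" "hd p = z" "last p = y" "distinct p" "walk E p" by blast
  show ?case
  proof (cases "x \<in> set p")
    case False
    then show ?thesis using p step(1) walk_Cons[of E p x] by (intro exI[of _ "x # p"]) auto
  next
    case True
    then obtain j where j: "j < length p" "p ! j = x" by (auto simp: in_set_conv_nth)
    then show ?thesis using p walk_drop
      by (intro exI[of _ "drop j p"]) (auto simp: hd_drop_conv_nth)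
  qed
qed

lemma cycle_edges_nth:
  "j < length vs \<Longrightarrow> {vs ! j, vs ! ((j + 1) mod length vs)} \<in> cycle_edges vs"
  unfolding cycle_edges_def by blast

lemma cycle_edges_last_hd: "p \<noteq> [] \<Longrightarrow> {last p, hd p} \<in> cycle_edges p"
  using cycle_edges_nth[of "length p - 1" p] by (simp add: last_conv_nth hd_conv_nth)

lemma subset_set_if_cycle_edge: "e \<in> cycle_edges vs \<Longrightarrow> e \<subseteq> set vs"
proof -
  assume "e \<in> cycle_edges vs"
  then obtain i where i: "i < length vs" "e = {vs ! i, vs ! ((i + 1) mod length vs)}"
    unfolding cycle_edges_def by blast
  have "(i + 1) mod length vs < length vs" using i(1) by (intro mod_less_divisor) linarith
  then show "e \<subseteq> set vs" using i by auto
qed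

lemma Union_cycle_edges:
  assumes "vs \<noteq> []"
  shows "\<Union>(cycle_edges vs) = set vs"
proof
  show "set vs \<subseteq> \<Union>(cycle_edges vs)"
  proof
    fix x assume "x \<in> set vs"
    then obtain i where "i < length vs" "vs ! i = x" by (auto simp: in_set_conv_nth)
    then show "x \<in> \<Union>(cycle_edges vs)" using cycle_edges_nth[of i vs] by blast
  qed
qed (use subset_set_if_cycle_edge in blast)

lemma cyclesE:
  assumes "C \<in> cycles V E"
  obtains vs where "C = cycle_edges vs" "distinct vs" "length vs \<ge> 3" "set vs \<subseteq> V"
    "cycle_edges vs \<subseteq> E" "\<Union>C = set vs"
proof -
  obtain vs where vs: "C = cycle_edges vs" "distinct vs" "length vs \<ge> 3" "set vs \<subseteq> V"
    "cycle_edges vs \<subseteq> E"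
    using assms unfolding cycles_def by blast
  moreover have "\<Union>C = set vs" using vs(1,3) Union_cycle_edges[of vs] by fastforce
  ultimately show thesis using that by blast
qed

lemma cycle_nonempty:
  assumes "C \<in> cycles V E"
  obtains y where "y \<in> \<Union>C"
proof -
  obtain vs where "length vs \<ge> 3" "\<Union>C = set vs" using assms by (rule cyclesE)
  then show thesis using that by (cases vs) auto
qed

lemma cycle_edges_in_cycles:
  "distinct vs \<Longrightarrow> length vs \<ge> 3 \<Longrightarrow> set vs \<subseteq> V \<Longrightarrow> cycle_edges vs \<subseteq> E \<Longrightarrow>
    cycle_edges vs \<in> cycles V E"
  unfolding cycles_def by blast

lemma closed_walk_in_cycles:
  assumes "walk E p" "length p \<ge> 3" "{last p, hd p} \<in> E" "distinct p" "set p \<subseteq> V"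
  shows "cycle_edges p \<in> cycles V E"
proof -
  have "cycle_edges p \<subseteq> E"
  proof
    fix e assume "e \<in> cycle_edges p"
    then obtain i where i: "i < length p" "e = {p ! i, p ! ((i + 1) mod length p)}"
      unfolding cycle_edges_def by blast
    show "e \<in> E"
    proof (cases "Suc i < length p")
      case True
      then show "e \<in> E" using assms(1) i unfolding walk_def by simp
    next
      case False
      then have "Suc i = length p" using i(1) by simp
      then have "i = length p - 1" "(i + 1) mod length p = 0" by auto
      moreover have "p \<noteq> []" using assms(2) by auto
      ultimately show "e \<in> E" using i(2) assms(3) by (simp add: last_conv_nth hd_conv_nth)
    qed
  qed
  with assms(2,4,5) show ?thesis by (simp add: cycle_edges_in_cycles)
qed

lemma cycles_subset_Pow: "cycles V E \<subseteq> Pow (Pow V)"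
  unfolding cycles_def using subset_set_if_cycle_edge by blast

lemma finite_cycles: "finite V \<Longrightarrow> finite (cycles V E)"
  by (meson cycles_subset_Pow finite_Pow_iff finite_subset)

lemma cycles_mono:
  assumes "V' \<subseteq> V" "E' \<subseteq> E"
  shows "cycles V' E' \<subseteq> cycles V E"
proof
  fix C assume "C \<in> cycles V' E'"
  then obtain vs where "C = cycle_edges vs" "distinct vs" "length vs \<ge> 3" "set vs \<subseteq> V'"
    "cycle_edges vs \<subseteq> E'"
    by (rule cyclesE)
  with assms show "C \<in> cycles V E" by (simp add: cycle_edges_in_cycles)
qed

lemma cycles_delete_vertex:
  "cycles (V - {v}) (delete_vertex E v) = {C \<in> cycles V E. v \<notin> \<Union>C}"
proof
  show "{C \<in> cycles V E. v \<notin> \<Union>C} \<subseteq> cycles (V - {v}) (delete_vertex E v)"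
  proof
    fix C assume "C \<in> {C \<in> cycles V E. v \<notin> \<Union>C}"
    then have C: "C \<in> cycles V E" "v \<notin> \<Union>C" by simp_all
    obtain vs where vs: "C = cycle_edges vs" "distinct vs" "length vs \<ge> 3" "set vs \<subseteq> V"
      "cycle_edges vs \<subseteq> E" "\<Union>C = set vs"
      using C(1) by (rule cyclesE)
    then have "set vs \<subseteq> V - {v}" "cycle_edges vs \<subseteq> delete_vertex E v" using C(2) by auto
    then show "C \<in> cycles (V - {v}) (delete_vertex E v)" using vs by (simp add: cycle_edges_in_cycles)
  qed
qed (unfold cycles_def, auto)

lemma pendant_not_on_cycle:
  assumes pendant: "\<And>w. {v, w} \<in> E \<Longrightarrow> w = u" and C: "C \<in> cycles V E"
  shows "v \<notin> \<Union>C"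
proof
  assume "v \<in> \<Union>C"
  obtain vs where vs: "C = cycle_edges vs" "distinct vs" "length vs \<ge> 3" "cycle_edges vs \<subseteq> E"
    "\<Union>C = set vs"
    using C by (rule cyclesE)
  define k where "k = length vs"
  obtain i where i: "i < k" "vs ! i = v"
    using \<open>v \<in> \<Union>C\<close> vs(5) unfolding k_def by (auto simp: in_set_conv_nth)
  \<comment> \<open>the two cycle neighbours of \<open>v\<close> are distinct, yet both must equal \<open>u\<close>\<close>
  define j1 where "j1 = (if i + 1 = k then 0 else i + 1)"
  define j2 where "j2 = (if i = 0 then k - 1 else i - 1)"
  have k3: "k \<ge> 3" using vs(3) k_def by simp
  have j: "j1 < k" "j2 < k" "(i + 1) mod k = j1" "(j2 + 1) mod k = i" "j1 \<noteq> j2"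
    using i k3 unfolding j1_def j2_def by auto
  have "{v, vs ! j1} \<in> E" "{vs ! j2, v} \<in> E"
    using cycle_edges_nth[of i vs] cycle_edges_nth[of j2 vs] i j vs(4) unfolding k_def by auto
  then have "vs ! j1 = vs ! j2" using pendant by (metis insert_commute)
  then show False using vs(2) j unfolding k_def by (simp add: nth_eq_iff_index_eq)
qed

lemma cycles_singleton: "cycles {r} F = {}"
proof -
  have "card (set vs) \<le> 1" if "set vs \<subseteq> {r}" for vs :: "'a list"
    using card_mono[OF _ that] by simp
  then show ?thesis unfolding cycles_def by (fastforce simp: distinct_card)
qed

lemma maximal_path_exists:
  assumes "finite V" "x \<in> V"
  shows "\<exists>p. p \<noteq> [] \<and> distinct p \<and> set p \<subseteq> V \<and> walk E p \<and>
    (\<forall>u\<in>V. {u, hd p} \<in> E \<longrightarrow> u \<in> set p)"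
proof -
  define P where "P = {p. p \<noteq> [] \<and> distinct p \<and> set p \<subseteq> V \<and> walk E p}"
  have "length q < Suc (card V)" if "q \<in> P" for q
  proof -
    have "distinct q" "set q \<subseteq> V" using that unfolding P_def by auto
    then show ?thesis using distinct_card[of q] card_mono[OF assms(1), of "set q"] by simp
  qed
  moreover have "[x] \<in> P" using assms(2) unfolding P_def by simp
  ultimately obtain p where p: "p \<in> P" and longest: "\<And>q. q \<in> P \<Longrightarrow> length q \<le> length p"
    using Lattices_Big.ex_has_greatest_nat[of "\<lambda>q. q \<in> P" "[x]" length] by metis
  have "u \<in> set p" if "u \<in> V" "{u, hd p} \<in> E" for u
  proof (rule ccontr)
    assume "u \<notin> set p"
    then have "u # p \<in> P" using p that walk_Cons[of E p u] unfolding P_def by auto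
    then show False using longest by fastforce
  qed
  then show ?thesis using p unfolding P_def by blast
qed

lemma walk_tl_delete_hd:
  assumes "distinct p" "walk E p"
  shows "walk (delete_vertex E (hd p)) (tl p)"
  unfolding walk_def
proof (intro allI impI)
  fix i assume i: "Suc i < length (tl p)"
  then have len: "Suc (Suc i) < length p" by simp
  then have "p \<noteq> []" "hd p = p ! 0" by (cases p; simp)+
  then have "p ! Suc i \<noteq> hd p" "p ! Suc (Suc i) \<noteq> hd p"
    using nth_eq_iff_index_eq[OF assms(1), of "Suc i" 0]
      nth_eq_iff_index_eq[OF assms(1), of "Suc (Suc i)" 0] len
    by auto
  moreover have "{p ! Suc i, p ! Suc (Suc i)} \<in> E" using assms(2) i unfolding walk_def by simp
  ultimately show "{tl p ! i, tl p ! Suc i} \<in> delete_vertex E (hd p)"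
    using i by (simp add: nth_tl)
qed

lemma exists_non_cut_vertex:
  assumes sg: "simple_graph V E" and cg: "connected_graph V E" and "card V \<ge> 2"
  obtains v where "v \<in> V" "connected_graph (V - {v}) (delete_vertex E v)"
proof -
  have finV: "finite V" using sg unfolding simple_graph_def by blast
  obtain x where "x \<in> V" using cg unfolding connected_graph_def by blast
  then obtain p where p: "p \<noteq> []" "distinct p" "set p \<subseteq> V" "walk E p"
    and nbrs: "\<forall>u\<in>V. {u, hd p} \<in> E \<longrightarrow> u \<in> set p"
    using maximal_path_exists[OF finV, of x E] by blast
  define v where "v = hd p"
  define q where "q = tl p"
  have p_eq: "p = v # q" using p(1) unfolding v_def q_def by simp
  have vV: "v \<in> V" using p(3) p_eq by simp
  have nbrs_q: "u \<in> set q" if "{u, v} \<in> E" for u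
  proof -
    have "u \<in> set p" "u \<noteq> v" using nbrs edge_endpoints[OF sg that] that unfolding v_def by auto
    then show ?thesis using p_eq by simp
  qed
  have "V \<noteq> {v}" using \<open>card V \<ge> 2\<close> by auto
  then obtain u0 where "{v, u0} \<in> E" using connected_graph_neighbour[OF cg vV] by blast
  then have "q \<noteq> []" using nbrs_q[of u0] by (auto simp: insert_commute)
  have "walk (delete_vertex E v) q" using walk_tl_delete_hd[OF p(2,4)] unfolding v_def q_def .
  then have from_hd: "(hd q, y) \<in> (adj (delete_vertex E v))\<^sup>*" if "y \<in> set q" for y
    using walk_nth_rtrancl[OF \<open>walk (delete_vertex E v) q\<close>, of _ 0] that \<open>q \<noteq> []\<close>
    by (auto simp: in_set_conv_nth hd_conv_nth)
  have to_hd: "(y, hd q) \<in> (adj (delete_vertex E v))\<^sup>*" if "y \<in> V - {v}" for y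
  proof -
    have y: "y \<in> V" "y \<noteq> v" using that by auto
    then have "(y, v) \<in> (adj E)\<^sup>*" using cg vV unfolding connected_graph_adj by blast
    then obtain u where u: "(y, u) \<in> (adj (delete_vertex E v))\<^sup>*" "{u, v} \<in> E"
      using rtrancl_adj_last_edge y(2) by metis
    have "(u, hd q) \<in> (adj (delete_vertex E v))\<^sup>*"
      using rtrancl_adj_sym[OF from_hd[OF nbrs_q[OF u(2)]]] .
    with u(1) show ?thesis by (rule rtrancl_trans)
  qed
  have "connected_graph (V - {v}) (delete_vertex E v)"
    unfolding connected_graph_adj
    using \<open>V \<noteq> {v}\<close> vV rtrancl_trans[OF to_hd rtrancl_adj_sym[OF to_hd]] by blast
  then show thesis using that vV by blast
qed

lemma on_cycle_if_two_neighbours: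
  assumes sg: "simple_graph V E" and vV: "v \<in> V" and a: "{v, a} \<in> E" and b: "{v, b} \<in> E"
    and "a \<noteq> b" and cg: "connected_graph (V - {v}) (delete_vertex E v)"
  obtains C where "C \<in> cycles V E" "v \<in> \<Union>C"
proof -
  have "a \<in> V - {v}" "b \<in> V - {v}" using edge_endpoints[OF sg a] edge_endpoints[OF sg b] by auto
  then have ab: "(a, b) \<in> (adj (delete_vertex E v))\<^sup>*" using cg unfolding connected_graph_adj by simp
  obtain q where q: "q \<noteq> []" "hd q = a" "last q = b" "distinct q" "walk (delete_vertex E v) q"
    using rtrancl_adj_imp_path[OF ab] by blast
  have "length q \<ge> 2" using q \<open>a \<noteq> b\<close> by (cases q; cases "tl q") auto
  then have "set q \<subseteq> \<Union>(delete_vertex E v)" by (rule set_walk_subset[OF q(5)])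
  then have "set q \<subseteq> V - {v}" using sg unfolding simple_graph_def by auto
  moreover have "walk E (v # q)" using walk_Cons[OF walk_mono[OF q(5)]] q(1,2) a by blast
  moreover have "{last (v # q), hd (v # q)} \<in> E" using b q(1,3) by (simp add: insert_commute)
  moreover have "length (v # q) \<ge> 3" using \<open>length q \<ge> 2\<close> by simp
  ultimately have "cycle_edges (v # q) \<in> cycles V E"
    using closed_walk_in_cycles[of E "v # q" V] q(4) vV by auto
  moreover have "v \<in> \<Union>(cycle_edges (v # q))" using Union_cycle_edges[of "v # q"] by simp
  ultimately show thesis using that by blast
qed

section \<open>Necklaces\<close>

lemma necklace_subgraph:
  assumes "necklace V E" "V' \<subseteq> V" "E' \<subseteq> E" "connected_graph V' E'" "finite V"
  shows "necklace V' E'"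
  unfolding necklace_def
proof (intro conjI ballI)
  fix w assume w: "w \<in> V'"
  have "{C \<in> cycles V' E'. w \<in> \<Union>C} \<subseteq> {C \<in> cycles V E. w \<in> \<Union>C}"
    using cycles_mono[OF assms(2,3)] by blast
  moreover have "finite {C \<in> cycles V E. w \<in> \<Union>C}" using finite_cycles[OF assms(5)] by simp
  ultimately have "card {C \<in> cycles V' E'. w \<in> \<Union>C} \<le> card {C \<in> cycles V E. w \<in> \<Union>C}"
    by (rule card_mono[rotated])
  also have "\<dots> \<le> 1" using assms(1,2) w unfolding necklace_def by blast
  finally show "card {C \<in> cycles V' E'. w \<in> \<Union>C} \<le> 1" .
qed (fact assms(4))

lemma necklace_cycle_unique:
  assumes "necklace V E" "finite V" "C1 \<in> cycles V E" "C2 \<in> cycles V E" "y \<in> \<Union>C1" "y \<in> \<Union>C2"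
  shows "C1 = C2"
proof -
  have "y \<in> V" using assms(3,5) cycles_subset_Pow by blast
  then have "card {C \<in> cycles V E. y \<in> \<Union>C} \<le> 1" using assms(1) unfolding necklace_def by blast
  moreover have "finite {C \<in> cycles V E. y \<in> \<Union>C}" using finite_cycles[OF assms(2)] by simp
  moreover have "C1 \<in> {C \<in> cycles V E. y \<in> \<Union>C}" "C2 \<in> {C \<in> cycles V E. y \<in> \<Union>C}"
    using assms(3-6) by simp_all
  ultimately show ?thesis using card_le_Suc0_iff_eq[of "{C \<in> cycles V E. y \<in> \<Union>C}"] by auto
qed

lemma card_cycles_delete_vertex_on_cycle:
  assumes "necklace V E" "finite V" "C \<in> cycles V E" "v \<in> \<Union>C"
  shows "card (cycles V E) = card (cycles (V - {v}) (delete_vertex E v)) + 1"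
proof -
  have "C' = C" if "C' \<in> cycles V E" "v \<in> \<Union>C'" for C'
    using necklace_cycle_unique[OF assms(1,2) that(1) assms(3) that(2) assms(4)] .
  then have "cycles V E = insert C {C' \<in> cycles V E. v \<notin> \<Union>C'}"
    using assms(3) by blast
  moreover have "C \<notin> {C' \<in> cycles V E. v \<notin> \<Union>C'}" using assms(4) by blast
  moreover have "finite (cycles V E)" using finite_cycles[OF assms(2)] .
  ultimately have "card (cycles V E) = card {C' \<in> cycles V E. v \<notin> \<Union>C'} + 1"
    by (metis Suc_eq_plus1 card_insert_disjoint finite_insert)
  then show ?thesis by (simp add: cycles_delete_vertex)
qed

lemma bridgeless_necklace_is_cycle:
  assumes sg: "simple_graph V E" and nl: "necklace V E" and "card V \<ge> 2"
    and on_cycle: "\<And>e. e \<in> E \<Longrightarrow> \<exists>C\<in>cycles V E. e \<in> C"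
  obtains vs where "distinct vs" "length vs \<ge> 3" "V = set vs" "E = cycle_edges vs"
    "cycles V E = {cycle_edges vs}"
proof -
  have finV: "finite V" using sg unfolding simple_graph_def by blast
  have cg: "connected_graph V E" using nl unfolding necklace_def by blast
  obtain x where x: "x \<in> V" using cg unfolding connected_graph_def by blast
  then have "V \<noteq> {x}" using \<open>card V \<ge> 2\<close> by auto
  then obtain u where "{x, u} \<in> E" using connected_graph_neighbour[OF cg x] by blast
  then obtain C0 where C0: "C0 \<in> cycles V E" "{x, u} \<in> C0" using on_cycle by blast
  obtain vs where vs: "C0 = cycle_edges vs" "distinct vs" "length vs \<ge> 3" "set vs \<subseteq> V"
    "cycle_edges vs \<subseteq> E" "\<Union>C0 = set vs"
    using C0(1) by (rule cyclesE)
  have same: "C = C0" if "C \<in> cycles V E" "y \<in> \<Union>C" "y \<in> set vs" for C y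
    using necklace_cycle_unique[OF nl finV that(1) C0(1) that(2)] that(3) vs(6) by blast
  have edge_in_C0: "e \<in> C0" if "e \<in> E" "y \<in> e" "y \<in> set vs" for e y
  proof -
    obtain C where "C \<in> cycles V E" "e \<in> C" using on_cycle \<open>e \<in> E\<close> by blast
    with that same show ?thesis by blast
  qed
  have "x \<in> set vs" using C0(2) vs(6) by blast
  then have V_eq: "set vs = V"
    using connected_graph_closed_subset[OF cg vs(4)] edge_in_C0 vs(6) by blast
  have "E = C0"
  proof
    show "E \<subseteq> C0"
    proof
      fix e assume "e \<in> E"
      then obtain p q where "e = {p, q}" using sg unfolding simple_graph_def by (metis card_2_iff)
      then show "e \<in> C0" using edge_in_C0 \<open>e \<in> E\<close> edge_endpoints[OF sg] V_eq by blast
    qed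
  qed (use vs(1,5) in simp)
  moreover have "cycles V E = {C0}"
  proof
    show "cycles V E \<subseteq> {C0}"
    proof
      fix C assume C: "C \<in> cycles V E"
      then obtain y where "y \<in> \<Union>C" by (rule cycle_nonempty)
      moreover have "\<Union>C \<subseteq> V" using C cycles_subset_Pow by blast
      ultimately show "C \<in> {C0}" using same[OF C] V_eq by blast
    qed
  qed (use C0(1) in simp)
  ultimately show thesis using that vs V_eq[symmetric] by blast
qed

locale necklace_bridge =
  fixes V :: "'a set" and E :: "'a set set" and a b :: 'a
  assumes simple: "simple_graph V E" and necklace: "necklace V E" and edge: "{a, b} \<in> E"
    and bridge: "\<And>C. C \<in> cycles V E \<Longrightarrow> {a, b} \<notin> C"

begin

definition side :: "'a \<Rightarrow> 'a set" where
  "side r = {x \<in> V. (r, x) \<in> (adj (E - {{a, b}}))\<^sup>*}"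

lemma finite_V: "finite V"
  using simple unfolding simple_graph_def by blast

lemma ends: "a \<noteq> b" "a \<in> V" "b \<in> V"
  using edge_endpoints[OF simple edge] by auto

lemma side_subset: "side r \<subseteq> V"
  unfolding side_def by blast

lemma root_in_side: "r \<in> V \<Longrightarrow> r \<in> side r"
  unfolding side_def by simp

lemma side_closed:
  assumes "x \<in> side r" "{x, y} \<in> E" "{x, y} \<noteq> {a, b}"
  shows "y \<in> side r"
proof -
  have "(x, y) \<in> adj (E - {{a, b}})" using assms(2,3) by (simp del: insert_Diff_if)
  moreover have "(r, x) \<in> (adj (E - {{a, b}}))\<^sup>*" using assms(1) unfolding side_def by simp
  ultimately have "(r, y) \<in> (adj (E - {{a, b}}))\<^sup>*" by (rule rtrancl_into_rtrancl[rotated])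
  then show ?thesis using edge_endpoints[OF simple assms(2)] unfolding side_def by blast
qed

lemma connected_side:
  assumes "r \<in> V"
  shows "connected_graph (side r) (induced E (side r))"
proof -
  have reach: "x \<in> side r \<and> (r, x) \<in> (adj (induced E (side r)))\<^sup>*"
    if "(r, x) \<in> (adj (E - {{a, b}}))\<^sup>*" for x
    using that
  proof (induction rule: rtrancl_induct)
    case base then show ?case using root_in_side[OF assms] by simp
  next
    case (step y z)
    have yz: "{y, z} \<in> E" "{y, z} \<noteq> {a, b}" using step(2) by auto
    have "z \<in> side r" using side_closed[OF conjunct1[OF step.IH] yz] .
    then have "(y, z) \<in> adj (induced E (side r))" using step.IH yz by simp
    then show ?case using \<open>z \<in> side r\<close> step.IH by (auto intro: rtrancl_into_rtrancl)
  qed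
  have from_root: "(r, x) \<in> (adj (induced E (side r)))\<^sup>*" if "x \<in> side r" for x
    using reach[of x] that unfolding side_def by simp
  show ?thesis
    unfolding connected_graph_adj
  proof (intro conjI ballI)
    fix x y assume "x \<in> side r" "y \<in> side r"
    then show "(x, y) \<in> (adj (induced E (side r)))\<^sup>*"
      using rtrancl_adj_via[OF from_root from_root] by blast
  qed (use root_in_side[OF assms] in blast)
qed

lemma cycle_in_side:
  assumes C: "C \<in> cycles V E" and y: "y \<in> \<Union>C" "y \<in> side r"
  shows "C \<in> cycles (side r) (induced E (side r))"
proof -
  obtain vs where vs: "C = cycle_edges vs" "distinct vs" "length vs \<ge> 3" "set vs \<subseteq> V"
    "cycle_edges vs \<subseteq> E" "\<Union>C = set vs"
    using C by (rule cyclesE)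
  define k where "k = length vs"
  obtain i0 where i0: "i0 < k" "vs ! i0 = y"
    using y(1) vs(6) unfolding k_def by (auto simp: in_set_conv_nth)
  have step: "vs ! ((i + 1) mod k) \<in> side r" if "i < k" "vs ! i \<in> side r" for i
  proof -
    have "{vs ! i, vs ! ((i + 1) mod k)} \<in> C"
      using cycle_edges_nth[of i vs] that(1) vs(1) unfolding k_def by simp
    then have "{vs ! i, vs ! ((i + 1) mod k)} \<in> E" "{vs ! i, vs ! ((i + 1) mod k)} \<noteq> {a, b}"
      using vs(1,5) bridge[OF C] by auto
    then show ?thesis by (rule side_closed[OF that(2)])
  qed
  have all: "vs ! ((i0 + j) mod k) \<in> side r" for j
  proof (induction j)
    case (Suc j)
    have "(i0 + j) mod k < k" using i0(1) by simp
    from step[OF this Suc.IH] show ?case by (simp add: mod_Suc_eq)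
  qed (use i0 y(2) in simp)
  have "set vs \<subseteq> side r"
  proof
    fix x assume "x \<in> set vs"
    then obtain i where i: "i < k" "vs ! i = x" unfolding k_def by (auto simp: in_set_conv_nth)
    have "(i0 + (k - i0 + i)) mod k = i" using i i0 by (simp add: mod_if)
    then show "x \<in> side r" using all[of "k - i0 + i"] i by simp
  qed
  then have "cycle_edges vs \<subseteq> induced E (side r)"
    using vs(5) subset_set_if_cycle_edge[of _ vs] by auto
  then show ?thesis using cycle_edges_in_cycles vs(1-3) \<open>set vs \<subseteq> side r\<close> by metis
qed

lemma b_notin_side_a: "b \<notin> side a"
proof
  assume "b \<in> side a"
  then have "(a, b) \<in> (adj (E - {{a, b}}))\<^sup>*" unfolding side_def by simp
  then obtain q where q: "q \<noteq> []" "hd q = a" "last q = b" "distinct q" "walk (E - {{a, b}}) q"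
    using rtrancl_adj_imp_path by metis
  have "length q \<ge> 2" using q ends(1) by (cases q; cases "tl q") auto
  have "length q \<noteq> 2"
  proof
    assume "length q = 2"
    then have "q = [a, b]" using q(1-3) by (cases q; cases "tl q") auto
    then show False using q(5) by (simp add: walk_Cons_Cons)
  qed
  then have "length q \<ge> 3" using \<open>length q \<ge> 2\<close> by linarith
  have "set q \<subseteq> V"
    using set_walk_subset[OF q(5) \<open>length q \<ge> 2\<close>] simple unfolding simple_graph_def by blast
  moreover have "walk E q" using walk_mono[OF q(5)] by blast
  moreover have "{last q, hd q} \<in> E" using edge q(2,3) by (simp add: insert_commute)
  ultimately have "cycle_edges q \<in> cycles V E"
    using closed_walk_in_cycles[OF _ \<open>length q \<ge> 3\<close> _ q(4)] by blast
  moreover have "{a, b} \<in> cycle_edges q"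
    using cycle_edges_last_hd[OF q(1)] q(2,3) by (simp add: insert_commute)
  ultimately show False using bridge by blast
qed

lemma sides_disjoint: "side a \<inter> side b = {}"
proof (rule ccontr)
  assume "side a \<inter> side b \<noteq> {}"
  then obtain x where "(a, x) \<in> (adj (E - {{a, b}}))\<^sup>*" "(b, x) \<in> (adj (E - {{a, b}}))\<^sup>*"
    unfolding side_def by blast
  then have "(a, b) \<in> (adj (E - {{a, b}}))\<^sup>*" by (meson rtrancl_adj_sym rtrancl_trans)
  then show False using b_notin_side_a ends unfolding side_def by simp
qed

lemma sides_cover: "side a \<union> side b = V"
proof
  have "x \<in> side a \<union> side b" if "(a, x) \<in> (adj E)\<^sup>*" for x
    using that
  proof (induction rule: rtrancl_induct)
    case base then show ?case using root_in_side ends by blast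
  next
    case (step y z)
    then have yz: "{y, z} \<in> E" by simp
    show ?case
    proof (cases "{y, z} = {a, b}")
      case True
      then show ?thesis using root_in_side ends by (auto simp: doubleton_eq_iff)
    qed (use step.IH side_closed yz in blast)
  qed
  then show "V \<subseteq> side a \<union> side b"
    using necklace ends unfolding necklace_def connected_graph_adj by blast
qed (use side_subset in blast)

lemma cross_edges:
  assumes "x \<in> side a" "y \<in> side b"
  shows "{x, y} \<in> E \<longleftrightarrow> x = a \<and> y = b"
proof
  assume xy: "{x, y} \<in> E"
  show "x = a \<and> y = b"
  proof (cases "{x, y} = {a, b}")
    case False
    then have "y \<in> side a" using side_closed[OF assms(1) xy] by blast
    then show ?thesis using assms(2) sides_disjoint by blast
  next
    case True
    then show ?thesis using assms(1) b_notin_side_a by (auto simp: doubleton_eq_iff)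
  qed
qed (use edge in simp)

lemma simple_side: "simple_graph (side r) (induced E (side r))"
  using simple_graph_induced[OF simple side_subset] .

lemma necklace_side: "r \<in> V \<Longrightarrow> necklace (side r) (induced E (side r))"
  using necklace_subgraph[OF necklace side_subset _ connected_side finite_V] by blast

lemma card_cycles_sides:
  "card (cycles V E) =
     card (cycles (side a) (induced E (side a))) + card (cycles (side b) (induced E (side b)))"
proof -
  let ?CA = "cycles (side a) (induced E (side a))" and ?CB = "cycles (side b) (induced E (side b))"
  have "cycles V E \<subseteq> ?CA \<union> ?CB"
  proof
    fix C assume C: "C \<in> cycles V E"
    then obtain y where y: "y \<in> \<Union>C" by (rule cycle_nonempty)
    then have "y \<in> side a \<union> side b" using C cycles_subset_Pow sides_cover by blast
    then show "C \<in> ?CA \<union> ?CB" using cycle_in_side[OF C y] by blast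
  qed
  moreover have "?CA \<union> ?CB \<subseteq> cycles V E"
    using cycles_mono[OF side_subset, of "induced E (side a)" E]
      cycles_mono[OF side_subset, of "induced E (side b)" E] by blast
  moreover have "?CA \<inter> ?CB = {}"
  proof (rule ccontr)
    assume "?CA \<inter> ?CB \<noteq> {}"
    then obtain C where C: "C \<in> ?CA" "C \<in> ?CB" by blast
    then obtain y where "y \<in> \<Union>C" by (blast elim: cycle_nonempty)
    then show False using C cycles_subset_Pow sides_disjoint by blast
  qed
  moreover have "finite ?CA" "finite ?CB"
    using finite_cycles finite_V side_subset finite_subset by metis+
  ultimately show ?thesis by (simp add: card_Un_disjoint subset_antisym)
qed

lemma card_V: "card V = card (side a) + card (side b)"
  using card_Un_disjoint[OF _ _ sides_disjoint] sides_cover finite_V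
  by (metis finite_Un)

lemma card_side_less: "r \<in> {a, b} \<Longrightarrow> card (side r) < card V"
proof -
  have "finite (side a)" "finite (side b)" using finite_subset[OF side_subset finite_V] by auto
  then have "card (side a) > 0" "card (side b) > 0"
    using root_in_side ends by (auto simp: card_gt_0_iff)
  then show "r \<in> {a, b} \<Longrightarrow> card (side r) < card V" using card_V by auto
qed

end

section \<open>The lower bound\<close>

lemma orth_rep_delete_vertex: "orth_rep V E d \<phi> \<Longrightarrow> orth_rep (V - {v}) (delete_vertex E v) d \<phi>"
  unfolding orth_rep_def by auto

definition subtract_projection ::
    "nat \<Rightarrow> ('a \<Rightarrow> nat \<Rightarrow> real) \<Rightarrow> 'a \<Rightarrow> 'a \<Rightarrow> 'a \<Rightarrow> nat \<Rightarrow> real" where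
  "subtract_projection d \<phi> u v =
     \<phi>(u := (\<lambda>i. \<phi> u i - dot d (\<phi> u) (\<phi> v) / dot d (\<phi> v) (\<phi> v) * \<phi> v i))"

lemma dot_subtract_projection:
  "dot d (subtract_projection d \<phi> u v u) g =
     dot d (\<phi> u) g - dot d (\<phi> u) (\<phi> v) / dot d (\<phi> v) (\<phi> v) * dot d (\<phi> v) g"
  unfolding subtract_projection_def fun_upd_same by (rule dot_diff_scale)

lemma pendant_projection_orth_rep:
  assumes rep: "orth_rep V E d \<phi>" and sg: "simple_graph V E" and vV: "v \<in> V"
    and pendant: "\<And>w. {v, w} \<in> E \<Longrightarrow> w = u" and vu: "{v, u} \<in> E"
    and w: "w \<in> V" "w \<noteq> v" "w \<noteq> u" "{u, w} \<in> E"
  shows "orth_rep (V - {v}) (delete_vertex E v) d (subtract_projection d \<phi> u v)"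
proof -
  define \<psi> where "\<psi> = subtract_projection d \<phi> u v"
  have uV: "u \<in> V" "u \<noteq> v" using edge_endpoints[OF sg vu] by auto
  have nz: "nonzero_on V d \<phi>" and orth: "orth_pattern V E d \<phi>"
    using rep unfolding orth_rep_iff by auto
  have \<psi>_other: "\<psi> x = \<phi> x" if "x \<noteq> u" for x
    using that unfolding \<psi>_def subtract_projection_def by simp
  have \<psi>_u: "dot d (\<psi> u) (\<phi> y) = dot d (\<phi> u) (\<phi> y)" if "y \<in> V" "y \<noteq> v" "y \<noteq> u" for y
  proof -
    have "dot d (\<phi> v) (\<phi> y) = 0" using orth vV that pendant unfolding orth_pattern_def by auto
    then show ?thesis unfolding \<psi>_def dot_subtract_projection by simp
  qed
  have dots: "dot d (\<psi> x) (\<psi> y) = dot d (\<phi> x) (\<phi> y)"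
    if "x \<in> V - {v}" "y \<in> V - {v}" "x \<noteq> y" for x y
  proof (cases "x = u")
    case True
    then show ?thesis using \<psi>_u[of y] \<psi>_other[of y] that by auto
  next
    case False
    then show ?thesis
      using \<psi>_u[of x] \<psi>_other[of x] \<psi>_other[of y] that dot_commute[of d "\<psi> x"] dot_commute[of d "\<phi> x"]
      by (cases "y = u") auto
  qed
  have "nonzero_on (V - {v}) d \<psi>"
    unfolding nonzero_on_def
  proof
    fix x assume x: "x \<in> V - {v}"
    show "\<exists>i<d. \<psi> x i \<noteq> 0"
    proof (cases "x = u")
      case True
      have "dot d (\<phi> u) (\<phi> w) \<noteq> 0" using orth uV w unfolding orth_pattern_def by auto
      then show ?thesis using True \<psi>_u[OF w(1-3)] nonzero_if_dot_nonzero by metis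
    qed (use nz x \<psi>_other in \<open>auto simp: nonzero_on_def\<close>)
  qed
  moreover have "orth_pattern (V - {v}) (delete_vertex E v) d \<psi>"
    using orth dots unfolding orth_pattern_def by auto
  ultimately show ?thesis unfolding \<psi>_def orth_rep_iff by simp
qed

lemma dot_combination_pendant:
  assumes orth: "orth_pattern V E d \<phi>" and vV: "v \<in> V" and pendant: "\<And>w. {v, w} \<in> E \<Longrightarrow> w = u"
    and T: "finite T" "T \<subseteq> V - {v}"
  shows "dot d (\<lambda>i. \<Sum>w\<in>insert v T. x w * \<phi> w i) (\<phi> v) =
    x v * dot d (\<phi> v) (\<phi> v) + (if u \<in> T then x u else 0) * dot d (\<phi> u) (\<phi> v)"
proof -
  have "(\<Sum>w\<in>T. x w * dot d (\<phi> w) (\<phi> v)) = (\<Sum>w\<in>T. if w = u then x u * dot d (\<phi> u) (\<phi> v) else 0)"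
  proof (rule sum.cong)
    fix w assume "w \<in> T"
    then have "w \<noteq> u \<Longrightarrow> dot d (\<phi> w) (\<phi> v) = 0"
      using orth vV T(2) pendant unfolding orth_pattern_def by (auto simp: insert_commute)
    then show "x w * dot d (\<phi> w) (\<phi> v) = (if w = u then x u * dot d (\<phi> u) (\<phi> v) else 0)" by auto
  qed simp
  moreover have "v \<notin> T" using T(2) by auto
  ultimately show ?thesis unfolding dot_sum_left using T(1) by (simp add: sum.delta)
qed

lemma pendant_projection_independent:
  assumes rep: "orth_rep V E d \<phi>" and vV: "v \<in> V" and pendant: "\<And>w. {v, w} \<in> E \<Longrightarrow> w = u"
    and T: "finite T" "T \<subseteq> V - {v}" and ind: "independent_on d (subtract_projection d \<phi> u v) T"
  shows "independent_on d \<phi> (insert v T)"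
  unfolding independent_on_def
proof (intro allI impI)
  fix x assume dep: "\<forall>i<d. (\<Sum>w\<in>insert v T. x w * \<phi> w i) = 0"
  define t where "t = dot d (\<phi> u) (\<phi> v) / dot d (\<phi> v) (\<phi> v)"
  define s where "s = (if u \<in> T then x u else 0)"
  have nz: "nonzero_on V d \<phi>" and orth: "orth_pattern V E d \<phi>"
    using rep unfolding orth_rep_iff by auto
  have vT: "v \<notin> T" using T(2) by auto
  have comb: "x v * \<phi> v i + (\<Sum>w\<in>T. x w * \<phi> w i) = 0" if "i < d" for i
    using dep that T(1) vT by simp
  have "0 = dot d (\<lambda>i. \<Sum>w\<in>insert v T. x w * \<phi> w i) (\<phi> v)"
    using dep unfolding dot_def by simp
  also have "\<dots> = x v * dot d (\<phi> v) (\<phi> v) + s * dot d (\<phi> u) (\<phi> v)"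
    unfolding s_def by (rule dot_combination_pendant[OF orth vV pendant T])
  finally have "x v * dot d (\<phi> v) (\<phi> v) + s * dot d (\<phi> u) (\<phi> v) = 0" by simp
  moreover have "0 < dot d (\<phi> v) (\<phi> v)" using nz vV dot_self_pos unfolding nonzero_on_def by blast
  ultimately have xv: "x v = - s * t" unfolding t_def by (simp add: field_simps)
  have proj: "(\<Sum>w\<in>T. x w * subtract_projection d \<phi> u v w i) = (\<Sum>w\<in>T. x w * \<phi> w i) - s * t * \<phi> v i"
    for i
  proof -
    have "(\<Sum>w\<in>T. x w * subtract_projection d \<phi> u v w i)
        = (\<Sum>w\<in>T. x w * \<phi> w i - (if w = u then x u * t * \<phi> v i else 0))"
      by (rule sum.cong) (auto simp: subtract_projection_def t_def algebra_simps)
    then show ?thesis using T(1) unfolding s_def by (simp add: sum_subtractf sum.delta)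
  qed
  have "\<forall>i<d. (\<Sum>w\<in>T. x w * subtract_projection d \<phi> u v w i) = 0"
  proof (intro allI impI)
    fix i assume "i < d"
    then have "(\<Sum>w\<in>T. x w * \<phi> w i) = s * t * \<phi> v i" using comb xv by (simp add: add_eq_0_iff)
    then show "(\<Sum>w\<in>T. x w * subtract_projection d \<phi> u v w i) = 0" using proj by simp
  qed
  then have xT: "\<forall>w\<in>T. x w = 0" using ind unfolding independent_on_def by blast
  then have "\<forall>i<d. x v * \<phi> v i = 0" using comb by simp
  then have "x v = 0" using nz vV unfolding nonzero_on_def by auto
  then show "\<forall>w\<in>insert v T. x w = 0" using xT by simp
qed

lemma orth_rep_delete_pendant:
  assumes rep: "orth_rep V E d \<phi>" and sg: "simple_graph V E" and vV: "v \<in> V"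
    and pendant: "\<And>w. {v, w} \<in> E \<Longrightarrow> w = u" and vu: "{v, u} \<in> E"
    and cg: "connected_graph (V - {v}) (delete_vertex E v)" and "V - {v} \<noteq> {u}"
  obtains \<psi> where "orth_rep (V - {v}) (delete_vertex E v) d \<psi>"
    "\<And>T. finite T \<Longrightarrow> T \<subseteq> V - {v} \<Longrightarrow> independent_on d \<psi> T \<Longrightarrow> independent_on d \<phi> (insert v T)"
proof -
  have "u \<in> V - {v}" using edge_endpoints[OF sg vu] by auto
  then obtain w where "{u, w} \<in> delete_vertex E v"
    using connected_graph_neighbour[OF cg] \<open>V - {v} \<noteq> {u}\<close> by metis
  then have "w \<in> V" "w \<noteq> v" "w \<noteq> u" "{u, w} \<in> E" using edge_endpoints[OF sg, of u w] by auto
  then show thesis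
    using that pendant_projection_orth_rep[OF rep sg vV pendant vu]
      pendant_projection_independent[OF rep vV pendant] by blast
qed

lemma exists_independent_complement_step:
  assumes sg: "simple_graph V E" and nl: "necklace V E" and rep: "orth_rep V E d \<phi>"
    and "card V \<ge> 3" and vV: "v \<in> V" and cg': "connected_graph (V - {v}) (delete_vertex E v)"
    and IH: "\<And>\<psi>. orth_rep (V - {v}) (delete_vertex E v) d \<psi> \<Longrightarrow> \<exists>S\<subseteq>V - {v}.
      card S \<le> card (cycles (V - {v}) (delete_vertex E v)) + 1 \<and> independent_on d \<psi> (V - {v} - S)"
  shows "\<exists>S\<subseteq>V. card S \<le> card (cycles V E) + 1 \<and> independent_on d \<phi> (V - S)"
proof -
  have finV: "finite V" using sg unfolding simple_graph_def by blast
  have cg: "connected_graph V E" using nl unfolding necklace_def by blast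
  have "card (V - {v}) \<ge> 2" using \<open>card V \<ge> 3\<close> finV vV by simp
  then have "V \<noteq> {v}" by auto
  then obtain u where vu: "{v, u} \<in> E" by (rule connected_graph_neighbour[OF cg vV])
  show ?thesis
  proof (cases "\<forall>w. {v, w} \<in> E \<longrightarrow> w = u")
    case False
    then obtain a where "{v, a} \<in> E" "a \<noteq> u" by blast
    then obtain C where "C \<in> cycles V E" "v \<in> \<Union>C"
      using on_cycle_if_two_neighbours[OF sg vV vu _ _ cg'] by metis
    then have cyc: "card (cycles V E) = card (cycles (V - {v}) (delete_vertex E v)) + 1"
      using card_cycles_delete_vertex_on_cycle[OF nl finV] by blast
    obtain S where "S \<subseteq> V - {v}" "card S \<le> card (cycles (V - {v}) (delete_vertex E v)) + 1"
      "independent_on d \<phi> (V - {v} - S)"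
      using IH[OF orth_rep_delete_vertex[OF rep]] by blast
    moreover have "card (insert v S) \<le> card S + 1" by (simp add: card_insert_le_m1)
    ultimately show ?thesis using vV cyc
      by (intro exI[of _ "insert v S"]) (auto simp: Diff_insert2[symmetric] insert_commute)
  next
    case pendant: True
    have cyc: "cycles (V - {v}) (delete_vertex E v) = cycles V E"
      using pendant_not_on_cycle[of v E u] pendant unfolding cycles_delete_vertex by blast
    have "V - {v} \<noteq> {u}"
    proof
      assume "V - {v} = {u}"
      then show False using \<open>card (V - {v}) \<ge> 2\<close> by simp
    qed
    obtain \<psi> where rep': "orth_rep (V - {v}) (delete_vertex E v) d \<psi>"
      and lift: "\<And>T. finite T \<Longrightarrow> T \<subseteq> V - {v} \<Longrightarrow> independent_on d \<psi> T \<Longrightarrow>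
        independent_on d \<phi> (insert v T)"
      using orth_rep_delete_pendant[OF rep sg vV _ vu cg' \<open>V - {v} \<noteq> {u}\<close>] pendant by metis
    obtain S where S: "S \<subseteq> V - {v}" "card S \<le> card (cycles V E) + 1"
      "independent_on d \<psi> (V - {v} - S)"
      using IH[OF rep'] cyc by metis
    have "independent_on d \<phi> (insert v (V - {v} - S))" using lift[OF _ _ S(3)] finV by blast
    moreover have "insert v (V - {v} - S) = V - S" using S(1) vV by blast
    ultimately show ?thesis using S(1,2) by (intro exI[of _ S]) auto
  qed
qed

lemma independent_on_subset_singleton:
  "T \<subseteq> {w} \<Longrightarrow> \<exists>i<d. f w i \<noteq> 0 \<Longrightarrow> independent_on d f T"
  unfolding independent_on_def by (auto simp: subset_singleton_iff)

lemma exists_independent_complement: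
  assumes "simple_graph V E" "necklace V E" "orth_rep V E d \<phi>"
  shows "\<exists>S\<subseteq>V. card S \<le> card (cycles V E) + 1 \<and> independent_on d \<phi> (V - S)"
  using assms
proof (induction "card V" arbitrary: V E \<phi> rule: less_induct)
  case less
  have sg: "simple_graph V E" and nl: "necklace V E" and rep: "orth_rep V E d \<phi>" by fact+
  have finV: "finite V" using sg unfolding simple_graph_def by blast
  have cg: "connected_graph V E" using nl unfolding necklace_def by blast
  show ?case
  proof (cases "card V \<ge> 3")
    case False
    obtain u where u: "u \<in> V" using cg unfolding connected_graph_def by blast
    then have "card (V - {u}) \<le> 1" using False finV by simp
    then have "\<forall>x\<in>V - {u}. \<forall>y\<in>V - {u}. x = y" using card_le_Suc0_iff_eq[of "V - {u}"] finV by simp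
    then obtain w where w: "V - {u} \<subseteq> {w}" "w \<in> V"
    proof (cases "V - {u} = {}")
      case False
      then obtain w where "w \<in> V - {u}" by blast
      with \<open>\<forall>x\<in>V - {u}. \<forall>y\<in>V - {u}. x = y\<close> that show thesis by blast
    qed (use u in blast)
    have "\<exists>i<d. \<phi> w i \<noteq> 0" using rep w(2) unfolding orth_rep_def by blast
    then have "independent_on d \<phi> (V - {u})" by (rule independent_on_subset_singleton[OF w(1)])
    then show ?thesis using u by (intro exI[of _ "{u}"]) auto
  next
    case True
    then have "card V \<ge> 2" by simp
    then obtain v where vV: "v \<in> V" and cg': "connected_graph (V - {v}) (delete_vertex E v)"
      by (rule exists_non_cut_vertex[OF sg cg])
    have "simple_graph (V - {v}) (delete_vertex E v)" using simple_graph_delete_vertex[OF sg] .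
    moreover have "necklace (V - {v}) (delete_vertex E v)"
      using necklace_subgraph[OF nl _ _ cg' finV] by blast
    moreover have "card (V - {v}) < card V" using card_Diff1_less[OF finV vV] .
    ultimately show ?thesis
      using exists_independent_complement_step[OF sg nl rep True vV cg'] less.hyps by blast
  qed
qed

lemma card_le_dim_orth_rep:
  assumes "simple_graph V E" "necklace V E" "orth_rep V E d \<phi>"
  shows "card V \<le> d + card (cycles V E) + 1"
proof -
  obtain S where S: "S \<subseteq> V" "card S \<le> card (cycles V E) + 1" "independent_on d \<phi> (V - S)"
    using exists_independent_complement[OF assms] by blast
  have "finite V" using assms(1) unfolding simple_graph_def by blast
  then have "card (V - S) \<le> d" using card_le_if_independent_on[OF _ S(3)] by blast
  moreover have "card V \<le> card (V - S) + card S"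
    using \<open>finite V\<close> S(1) by (simp add: card_Diff_subset finite_subset card_mono)
  ultimately show ?thesis using S(2) by linarith
qed

section \<open>The upper bound\<close>

text \<open>Orthogonal representation of the cycle \<open>0, 1, \<dots>, k - 1\<close> in dimension \<open>m = k - 2\<close>: vertex
  \<open>i < k - 1\<close> gets \<open>e\<^sub>i\<^sub>-\<^sub>1 + e\<^sub>i\<close> (with \<open>e\<^sub>-\<^sub>1 = e\<^sub>m = 0\<close>, so consecutive vertices share a
  coordinate) and vertex \<open>k - 1\<close> gets the alternating vector \<open>(1, -1, 1, \<dots>)\<close>, which is
  orthogonal to all of them except the two ends \<open>e\<^sub>0\<close> and \<open>e\<^sub>m\<^sub>-\<^sub>1\<close>.\<close>

definition path_vec :: "nat \<Rightarrow> nat \<Rightarrow> real" where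
  "path_vec i j = (if j + 1 = i then 1 else 0) + (if j = i then 1 else 0)"

definition cycle_vec :: "nat \<Rightarrow> nat \<Rightarrow> nat \<Rightarrow> real" where
  "cycle_vec k i = (if i = k - 1 then (\<lambda>j. (-1) ^ j) else path_vec i)"

lemma dot_path_vec:
  "dot m (path_vec i) g = (if 1 \<le> i \<and> i - 1 < m then g (i - 1) else 0) + (if i < m then g i else 0)"
proof -
  have "(\<Sum>j<m. if j + 1 = i then g j else 0) = (if 1 \<le> i \<and> i - 1 < m then g (i - 1) else 0)"
    by (cases i) (simp_all add: sum.delta)
  moreover have "dot m (path_vec i) g =
      (\<Sum>j<m. if j + 1 = i then g j else 0) + (\<Sum>j<m. if j = i then g j else 0)"
    unfolding dot_def path_vec_def sum.distrib[symmetric] by (intro sum.cong) auto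
  ultimately show ?thesis by (simp add: sum.delta)
qed

lemma dot_cycle_vec_eq_0_iff:
  assumes k: "k \<ge> 3" and i: "i < k" and i': "i' < k" and ne: "i \<noteq> i'"
  shows "dot (k - 2) (cycle_vec k i) (cycle_vec k i') = 0 \<longleftrightarrow>
    \<not> (i' = (i + 1) mod k \<or> i = (i' + 1) mod k)"
proof -
  define m where "m = k - 2"
  have km: "k = m + 2" "m \<ge> 1" using k unfolding m_def by auto
  have path_path: "dot m (path_vec a) (path_vec b) = 0 \<longleftrightarrow> \<not> (b = a + 1 \<or> a = b + 1)"
    if "a \<le> m" "b \<le> m" "a \<noteq> b" for a b
    using that unfolding dot_path_vec by (auto simp: path_vec_def)
  have path_alt: "dot m (path_vec a) (\<lambda>j. (-1) ^ j) = 0 \<longleftrightarrow> \<not> (a = 0 \<or> a = m)" if "a \<le> m" for a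
    using that km by (cases a) (auto simp: dot_path_vec)
  consider "i = k - 1" | "i' = k - 1" | "i \<le> m" "i' \<le> m" using i i' km by linarith
  then show ?thesis
  proof cases
    case 1
    then have "i' \<le> m" "cycle_vec k i' = path_vec i'" using i' ne km by (auto simp: cycle_vec_def)
    moreover have "(i' = (i + 1) mod k \<or> i = (i' + 1) mod k) \<longleftrightarrow> (i' = 0 \<or> i' = m)"
      using 1 km \<open>i' \<le> m\<close> by auto
    moreover have "cycle_vec k i = (\<lambda>j. (-1) ^ j)" using 1 by (simp add: cycle_vec_def)
    ultimately show ?thesis using path_alt[of i'] dot_commute unfolding m_def by metis
  next
    case 2
    then have "i \<le> m" "cycle_vec k i = path_vec i" using i ne km by (auto simp: cycle_vec_def)
    moreover have "(i' = (i + 1) mod k \<or> i = (i' + 1) mod k) \<longleftrightarrow> (i = 0 \<or> i = m)"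
      using 2 km \<open>i \<le> m\<close> by auto
    moreover have "cycle_vec k i' = (\<lambda>j. (-1) ^ j)" using 2 by (simp add: cycle_vec_def)
    ultimately show ?thesis using path_alt[of i] unfolding m_def by metis
  next
    case 3
    then have "cycle_vec k i = path_vec i" "cycle_vec k i' = path_vec i'"
      using km by (auto simp: cycle_vec_def)
    moreover have "(i' = (i + 1) mod k \<or> i = (i' + 1) mod k) \<longleftrightarrow> (i' = i + 1 \<or> i = i' + 1)"
      using 3 km by auto
    ultimately show ?thesis using path_path[OF 3 ne] unfolding m_def by metis
  qed
qed

lemma cycle_vec_nonzero:
  assumes "k \<ge> 3" "i < k"
  shows "\<exists>j<k - 2. cycle_vec k i j \<noteq> 0"
proof -
  consider "i = k - 1" | "i < k - 2" | "i = k - 2" using assms by linarith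
  then show ?thesis
  proof cases
    case 1 then show ?thesis using assms by (intro exI[of _ 0]) (auto simp: cycle_vec_def)
  next
    case 2 then show ?thesis by (intro exI[of _ i]) (auto simp: cycle_vec_def path_vec_def)
  next
    case 3 then show ?thesis using assms
      by (intro exI[of _ "k - 3"]) (auto simp: cycle_vec_def path_vec_def)
  qed
qed

lemma cycle_edges_nth_iff:
  assumes "distinct vs" "i < length vs" "i' < length vs"
  shows "{vs ! i, vs ! i'} \<in> cycle_edges vs \<longleftrightarrow>
    (i' = (i + 1) mod length vs \<or> i = (i' + 1) mod length vs)"
proof
  assume "{vs ! i, vs ! i'} \<in> cycle_edges vs"
  then obtain j where j: "j < length vs" "{vs ! i, vs ! i'} = {vs ! j, vs ! ((j + 1) mod length vs)}"
    unfolding cycle_edges_def by blast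
  have "(j + 1) mod length vs < length vs" using j(1) by (intro mod_less_divisor) linarith
  with j assms show "i' = (i + 1) mod length vs \<or> i = (i' + 1) mod length vs"
    by (auto simp: doubleton_eq_iff nth_eq_iff_index_eq)
next
  assume "i' = (i + 1) mod length vs \<or> i = (i' + 1) mod length vs"
  then show "{vs ! i, vs ! i'} \<in> cycle_edges vs"
    unfolding cycle_edges_def using assms(2,3) by (auto simp: insert_commute)
qed

lemma orth_rep_cycle:
  assumes "distinct vs" "length vs \<ge> 3"
  shows "\<exists>\<phi>. orth_rep (set vs) (cycle_edges vs) (length vs - 2) \<phi>"
proof -
  define k where "k = length vs"
  define \<phi> where "\<phi> x = cycle_vec k (the_inv_into {..<k} ((!) vs) x)" for x
  have \<phi>_nth: "\<phi> (vs ! i) = cycle_vec k i" if "i < k" for i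
    using that assms(1) unfolding \<phi>_def k_def by (simp add: the_inv_into_f_f inj_on_nth)
  have "orth_rep (set vs) (cycle_edges vs) (k - 2) \<phi>"
    unfolding orth_rep_iff nonzero_on_def orth_pattern_def
  proof (intro conjI ballI impI)
    fix x assume "x \<in> set vs"
    then obtain i where "i < k" "vs ! i = x" unfolding k_def by (auto simp: in_set_conv_nth)
    then show "\<exists>i<k - 2. \<phi> x i \<noteq> 0" using cycle_vec_nonzero assms(2) \<phi>_nth unfolding k_def by auto
  next
    fix x y assume "x \<in> set vs" "y \<in> set vs" "x \<noteq> y"
    then obtain i i' where "i < k" "vs ! i = x" "i' < k" "vs ! i' = y" "i \<noteq> i'"
      unfolding k_def by (auto simp: in_set_conv_nth)
    then show "dot (k - 2) (\<phi> x) (\<phi> y) = 0 \<longleftrightarrow> {x, y} \<notin> cycle_edges vs"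
      using dot_cycle_vec_eq_0_iff[of k i i'] cycle_edges_nth_iff[OF assms(1), of i i'] assms(2) \<phi>_nth
      unfolding k_def by auto
  qed
  then show ?thesis unfolding k_def by blast
qed

definition glue ::
    "'a set \<Rightarrow> 'a \<Rightarrow> 'a \<Rightarrow> nat \<Rightarrow> ('a \<Rightarrow> nat \<Rightarrow> real) \<Rightarrow> ('a \<Rightarrow> nat \<Rightarrow> real) \<Rightarrow> 'a \<Rightarrow> nat \<Rightarrow> real" where
  "glue A a b m \<phi>A \<phi>B x i =
     (if x \<in> A then (if i < m then \<phi>A x i else 0) else (if m < i then \<phi>B x (i - m - 1) else 0))
     + (if (x = a \<or> x = b) \<and> i = m then 1 else 0)"

lemma glue_coords:
  assumes "A \<inter> B = {}" "x \<in> A \<union> B"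
  shows "\<And>i. i < m \<Longrightarrow> glue A a b m \<phi>A \<phi>B x i = (if x \<in> A then \<phi>A x i else 0)"
    and "glue A a b m \<phi>A \<phi>B x m = (if x = a \<or> x = b then 1 else 0)"
    and "\<And>j. glue A a b m \<phi>A \<phi>B x (m + 1 + j) = (if x \<in> B then \<phi>B x j else 0)"
  using assms unfolding glue_def by auto

lemma dot_glue:
  assumes "A \<inter> B = {}" "a \<in> A" "b \<in> B" "x \<in> A \<union> B" "y \<in> A \<union> B" "x \<noteq> y"
  shows "dot (m + 1 + n) (glue A a b m \<phi>A \<phi>B x) (glue A a b m \<phi>A \<phi>B y) =
    (if x \<in> A \<and> y \<in> A then dot m (\<phi>A x) (\<phi>A y) else 0) +
    (if {x, y} = {a, b} then 1 else 0) +
    (if x \<in> B \<and> y \<in> B then dot n (\<phi>B x) (\<phi>B y) else 0)"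
proof -
  have "dot m (glue A a b m \<phi>A \<phi>B x) (glue A a b m \<phi>A \<phi>B y) =
      (if x \<in> A \<and> y \<in> A then dot m (\<phi>A x) (\<phi>A y) else 0)"
    unfolding dot_def using glue_coords(1)[OF assms(1,4)] glue_coords(1)[OF assms(1,5)]
    by (cases "x \<in> A"; cases "y \<in> A") simp_all
  moreover have "glue A a b m \<phi>A \<phi>B x m * glue A a b m \<phi>A \<phi>B y m = (if {x, y} = {a, b} then 1 else 0)"
    using glue_coords(2)[OF assms(1,4)] glue_coords(2)[OF assms(1,5)] assms(1-3,6)
    by (auto simp: doubleton_eq_iff)
  moreover have "dot n (\<lambda>j. glue A a b m \<phi>A \<phi>B x (m + 1 + j)) (\<lambda>j. glue A a b m \<phi>A \<phi>B y (m + 1 + j)) =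
      (if x \<in> B \<and> y \<in> B then dot n (\<phi>B x) (\<phi>B y) else 0)"
    unfolding dot_def using glue_coords(3)[OF assms(1,4)] glue_coords(3)[OF assms(1,5)]
    by (cases "x \<in> B"; cases "y \<in> B") simp_all
  ultimately show ?thesis unfolding dot_split by simp
qed

lemma nonzero_on_glue:
  assumes disj: "A \<inter> B = {}"
    and A: "nonzero_on (A - {a}) m \<phi>A" and B: "nonzero_on (B - {b}) n \<phi>B"
  shows "nonzero_on (A \<union> B) (m + 1 + n) (glue A a b m \<phi>A \<phi>B)"
  unfolding nonzero_on_def
proof
  fix x assume x: "x \<in> A \<union> B"
  consider "x = a \<or> x = b" | "x \<in> A - {a}" | "x \<in> B - {b}" using x by blast
  then show "\<exists>i<m + 1 + n. glue A a b m \<phi>A \<phi>B x i \<noteq> 0"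
  proof cases
    case 1 then show ?thesis using glue_coords(2)[OF disj x] by (intro exI[of _ m]) auto
  next
    case 2
    then obtain i where "i < m" "\<phi>A x i \<noteq> 0" using A unfolding nonzero_on_def by blast
    then show ?thesis using glue_coords(1)[OF disj x] 2 by (intro exI[of _ i]) auto
  next
    case 3
    then obtain j where "j < n" "\<phi>B x j \<noteq> 0" using B unfolding nonzero_on_def by blast
    then show ?thesis using glue_coords(3)[OF disj x] 3 disj by (intro exI[of _ "m + 1 + j"]) auto
  qed
qed

lemma orth_pattern_glue:
  assumes disj: "A \<inter> B = {}" and "a \<in> A" "b \<in> B"
    and cross: "\<And>x y. x \<in> A \<Longrightarrow> y \<in> B \<Longrightarrow> {x, y} \<in> E \<longleftrightarrow> x = a \<and> y = b"
    and A: "orth_pattern A (induced E A) m \<phi>A" and B: "orth_pattern B (induced E B) n \<phi>B"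
  shows "orth_pattern (A \<union> B) E (m + 1 + n) (glue A a b m \<phi>A \<phi>B)"
  unfolding orth_pattern_def
proof (intro ballI impI)
  fix x y assume x: "x \<in> A \<union> B" and y: "y \<in> A \<union> B" and "x \<noteq> y"
  note dots = dot_glue[OF disj \<open>a \<in> A\<close> \<open>b \<in> B\<close> x y \<open>x \<noteq> y\<close>]
  consider "x \<in> A" "y \<in> A" | "x \<in> B" "y \<in> B" | "x \<in> A" "y \<in> B" | "x \<in> B" "y \<in> A"
    using x y by blast
  then show "dot (m + 1 + n) (glue A a b m \<phi>A \<phi>B x) (glue A a b m \<phi>A \<phi>B y) = 0 \<longleftrightarrow> {x, y} \<notin> E"
  proof cases
    case 1 then show ?thesis
      using dots A \<open>x \<noteq> y\<close> disj \<open>b \<in> B\<close> unfolding orth_pattern_def by (auto simp: doubleton_eq_iff)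
  next
    case 2 then show ?thesis
      using dots B \<open>x \<noteq> y\<close> disj \<open>a \<in> A\<close> unfolding orth_pattern_def by (auto simp: doubleton_eq_iff)
  next
    case 3 then show ?thesis
      using dots cross[OF 3] disj \<open>a \<in> A\<close> \<open>b \<in> B\<close> by (auto simp: doubleton_eq_iff)
  next
    case 4 then show ?thesis using dots cross[OF 4(2,1)] disj \<open>a \<in> A\<close> \<open>b \<in> B\<close>
      by (auto simp: doubleton_eq_iff insert_commute)
  qed
qed

text \<open>A one-vertex side has no representation in dimension \<open>0\<close>; gluing only needs
  nonzero vectors away from the bridge end, whose vector receives the extra coordinate.\<close>

lemma orth_pattern_nonzero_off_root:
  assumes rep: "card X \<ge> 2 \<Longrightarrow> \<exists>d \<phi>. int d = int (card X) - int (card (cycles X F)) - 1 \<and> orth_rep X F d \<phi>"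
    and "r \<in> X" "finite X"
  shows "\<exists>d \<phi>. int d = int (card X) - int (card (cycles X F)) - 1 \<and>
    orth_pattern X F d \<phi> \<and> nonzero_on (X - {r}) d \<phi>"
proof (cases "card X \<ge> 2")
  case True
  then show ?thesis using rep unfolding orth_rep_iff nonzero_on_def by blast
next
  case False
  then have "card X \<le> Suc 0" by simp
  then have "X = {r}" using card_le_Suc0_iff_eq[OF assms(3)] assms(2) by blast
  then show ?thesis
    by (intro exI[of _ 0] exI[of _ "\<lambda>_ _. 0"])
      (simp add: cycles_singleton orth_pattern_def nonzero_on_def)
qed

context necklace_bridge
begin

lemma exists_orth_rep_from_sides:
  assumes "\<And>r. r \<in> {a, b} \<Longrightarrow> card (side r) \<ge> 2 \<Longrightarrow> \<exists>d \<phi>.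
    int d = int (card (side r)) - int (card (cycles (side r) (induced E (side r)))) - 1 \<and>
    orth_rep (side r) (induced E (side r)) d \<phi>"
  shows "\<exists>d \<phi>. int d = int (card V) - int (card (cycles V E)) - 1 \<and> orth_rep V E d \<phi>"
proof -
  have "\<exists>d \<phi>. int d = int (card (side r)) - int (card (cycles (side r) (induced E (side r)))) - 1 \<and>
      orth_pattern (side r) (induced E (side r)) d \<phi> \<and> nonzero_on (side r - {r}) d \<phi>"
    if "r \<in> {a, b}" for r
  proof (rule orth_pattern_nonzero_off_root[OF assms[OF that]])
    show "r \<in> side r" using that ends root_in_side by auto
    show "finite (side r)" using finite_subset[OF side_subset finite_V] .
  qed
  then obtain m n \<phi>A \<phi>B where
    A: "int m = int (card (side a)) - int (card (cycles (side a) (induced E (side a)))) - 1"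
      "orth_pattern (side a) (induced E (side a)) m \<phi>A" "nonzero_on (side a - {a}) m \<phi>A"
    and B: "int n = int (card (side b)) - int (card (cycles (side b) (induced E (side b)))) - 1"
      "orth_pattern (side b) (induced E (side b)) n \<phi>B" "nonzero_on (side b - {b}) n \<phi>B"
    using insertI1[of a "{b}"] insertI2[OF singletonI, of b a] by meson
  have "int (m + 1 + n) = int (card V) - int (card (cycles V E)) - 1"
    using A(1) B(1) card_V card_cycles_sides by simp
  moreover have "orth_rep (side a \<union> side b) E (m + 1 + n) (glue (side a) a b m \<phi>A \<phi>B)"
    unfolding orth_rep_iff
    using nonzero_on_glue[OF sides_disjoint A(3) B(3)]
      orth_pattern_glue[OF sides_disjoint _ _ cross_edges A(2) B(2)] root_in_side ends by simp
  ultimately show ?thesis unfolding sides_cover by blast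
qed

end

lemma exists_orth_rep:
  assumes "simple_graph V E" "necklace V E" "card V \<ge> 2"
  shows "\<exists>d \<phi>. int d = int (card V) - int (card (cycles V E)) - 1 \<and> orth_rep V E d \<phi>"
  using assms
proof (induction "card V" arbitrary: V E rule: less_induct)
  case less
  have sg: "simple_graph V E" and nl: "necklace V E" by fact+
  show ?case
  proof (cases "\<forall>e\<in>E. \<exists>C\<in>cycles V E. e \<in> C")
    case True
    obtain vs where vs: "distinct vs" "length vs \<ge> 3" "V = set vs" "E = cycle_edges vs"
      "cycles V E = {cycle_edges vs}"
      using bridgeless_necklace_is_cycle[OF sg nl less.prems(3)] True by blast
    moreover have "card V = length vs" using vs(1,3) by (simp add: distinct_card)
    ultimately show ?thesis using orth_rep_cycle[OF vs(1,2)] by (intro exI[of _ "length vs - 2"]) auto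
  next
    case False
    then obtain e where "e \<in> E" and bridge: "\<And>C. C \<in> cycles V E \<Longrightarrow> e \<notin> C" by blast
    moreover obtain a b where "e = {a, b}"
      using \<open>e \<in> E\<close> sg unfolding simple_graph_def by (metis card_2_iff)
    ultimately interpret necklace_bridge V E a b
      by (intro necklace_bridge.intro sg nl) simp_all
    show ?thesis
    proof (rule exists_orth_rep_from_sides)
      fix r assume r: "r \<in> {a, b}" "card (side r) \<ge> 2"
      then have "r \<in> V" using ends by auto
      show "\<exists>d \<phi>. int d = int (card (side r)) - int (card (cycles (side r) (induced E (side r)))) - 1 \<and>
          orth_rep (side r) (induced E (side r)) d \<phi>"
        using less.hyps[OF card_side_less[OF r(1)] simple_side necklace_side[OF \<open>r \<in> V\<close>] r(2)] .
    qed
  qed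
qed

theorem proposition5p4:
  fixes V :: "'a set" and E :: "'a set set" and c :: nat
  assumes "simple_graph V E"
    and "necklace V E"
    and "card V \<ge> 2"
    and "card (cycles V E) = c"
  shows "int (mvr V E) = int (card V) - int c - 1"
proof -
  obtain D \<phi> where D: "int D = int (card V) - int c - 1" "orth_rep V E D \<phi>"
    using exists_orth_rep[OF assms(1-3)] assms(4) by blast
  have "D \<le> d" if "orth_rep V E d \<psi>" for d \<psi>
    using card_le_dim_orth_rep[OF assms(1,2) that] D(1) assms(4) by linarith
  then have "mvr V E = D"
    unfolding mvr_def by (intro Least_equality) (use D(2) in blast)+
  then show ?thesis using D(1) by simp
qed

end
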